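(* Let $k>0$, $\delta(t)=\tfrac12e^{-t}+\tfrac12e^{-2t}$, $g_2\equiv0$ and $g_1(a)=-\frac14a^4+ka^3-k^2a^2-\frac34a-1$. Then in the continuous-time two-state model, $Q^*\sim(0,0)$ is a weak equilibrium but not a strong equilibrium. Moreover, for every sufficiently small $h>0$, the transition matrix $u^*\sim(0,0)$ (the identity matrix) is an equilibrium of the discrete-time problem $V^h(i,u)=\mathbb E_{i,u}[\sum_{n=0}^\infty\kappa^h(n,Y_n,u_{Y_n})]$ over all $2\times2$ transition matrices, where $\kappa^h(n,1,u_1)=\delta(nh)g_1(\alpha/h)h$ and $\kappa^h(n,2,u_2)=\delta(nh)g_2(\beta/h)h\equiv0$ for $u\sim(\alpha,\beta)$; consequently the associated generators $(u^*-I)/h\sim(0,0)$ converge to the weak but not strong equilibrium $Q^*$.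
   Context: Two-state continuous-time model: $S=\{1,2\}$, admissible rows unrestricted, so every generator has the form $Q=\begin{pmatrix}-a&a\\ b&-b\end{pmatrix}$, $a,b\ge0$, written $Q\sim(a,b)$; payoff $f(t,1,(-a,a))=\delta(t)g_1(a)$, $f(t,2,(b,-b))=\delta(t)g_2(b)$; $F(i,Q)=\mathbb E_{i,Q}[\int_0^\infty f(t,X_t,Q_{X_t})dt]$ for the chain $X$ with generator $Q$; $Q\otimes_\varepsilon Q'$ uses $Q$ on $[0,\varepsilon]$ and $Q'$ afterwards. $Q^*$ is a weak equilibrium if $\liminf_{\varepsilon\downarrow0}\varepsilon^{-1}(F(i,Q^* )-F(i,Q\otimes_\varepsilon Q^* ))\ge0$ for all $Q,i$; a strong equilibrium if for every $i,Q$ there is $\varepsilon>0$ with $F(i,Q^* )\ge F(i,Q\otimes_{\varepsilon'}Q^* )$ for all $0<\varepsilon'\le\varepsilon$. Discrete time: a transition matrix $u=\begin{pmatrix}1-\alpha&\alpha\\ \beta&1-\beta\end{pmatrix}$, $\alpha,\beta\in[0,1]$, is written $u\sim(\alpha,\beta)$; $Y$ is the discrete-time chain with transition matrix $u$; $u\otimes_1u^*$ uses $u$ at time $0$ and $u^*$ afterwards; $u^*$ is an equilibrium of $V^h$ if $V^h(i,u^* )\ge V^h(i,u\otimes_1u^* )$ for all $i\in S$ and all transition matrices $u$. *)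

theory Defs
  imports "HOL-Analysis.Analysis"
begin

definition gen :: "real \<Rightarrow> real \<Rightarrow> nat \<Rightarrow> nat \<Rightarrow> real" where
  "gen a b i j = (if i = 1 then (if j = 1 then - a else a) else (if j = 1 then b else - b))"

text \<open>Transition probabilities P_t = exp(t Q) of the chain with constant generator Q ~ (a,b).
  Since Q^2 = -(a+b) Q, exp(t Q) = I + phi(t) Q with phi(t) = (1 - exp(-(a+b)t))/(a+b)
  (and phi(t) = t if a + b = 0).\<close>
definition ctrans :: "real \<Rightarrow> real \<Rightarrow> real \<Rightarrow> nat \<Rightarrow> nat \<Rightarrow> real" where
  "ctrans a b t i j =
     (let lam = a + b;
          phi = (if lam = 0 then t else (1 - exp (- lam * t)) / lam)
      in (if i = j then 1 else 0) + phi * gen a b i j)"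

definition crew :: "(real \<Rightarrow> real) \<Rightarrow> (real \<Rightarrow> real) \<Rightarrow> (real \<Rightarrow> real)
    \<Rightarrow> real \<Rightarrow> real \<Rightarrow> real \<Rightarrow> nat \<Rightarrow> real" where
  "crew \<delta> g1 g2 a b t j = \<delta> t * (if j = 1 then g1 a else g2 b)"

definition cF :: "(real \<Rightarrow> real) \<Rightarrow> (real \<Rightarrow> real) \<Rightarrow> (real \<Rightarrow> real)
    \<Rightarrow> real \<Rightarrow> real \<Rightarrow> nat \<Rightarrow> real" where
  "cF \<delta> g1 g2 a b i =
     integral {0..} (\<lambda>t. \<Sum>j\<in>{1,2}. ctrans a b t i j * crew \<delta> g1 g2 a b t j)"

definition cFcat :: "(real \<Rightarrow> real) \<Rightarrow> (real \<Rightarrow> real) \<Rightarrow> (real \<Rightarrow> real)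
    \<Rightarrow> real \<Rightarrow> real \<Rightarrow> real \<Rightarrow> real \<Rightarrow> real \<Rightarrow> nat \<Rightarrow> real" where
  "cFcat \<delta> g1 g2 a b \<epsilon> a' b' i =
     integral {0..\<epsilon>} (\<lambda>t. \<Sum>j\<in>{1,2}. ctrans a b t i j * crew \<delta> g1 g2 a b t j)
   + integral {\<epsilon>..} (\<lambda>t. \<Sum>j\<in>{1,2}. \<Sum>k\<in>{1,2}.
        ctrans a b \<epsilon> i j * ctrans a' b' (t - \<epsilon>) j k * crew \<delta> g1 g2 a' b' t k)"

definition weak_equilibrium :: "(real \<Rightarrow> real) \<Rightarrow> (real \<Rightarrow> real) \<Rightarrow> (real \<Rightarrow> real)
    \<Rightarrow> real \<Rightarrow> real \<Rightarrow> bool" where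
  "weak_equilibrium \<delta> g1 g2 a b \<longleftrightarrow>
     (\<forall>a' b' i. 0 \<le> a' \<longrightarrow> 0 \<le> b' \<longrightarrow> i \<in> {1,2} \<longrightarrow>
        Liminf (at_right 0)
          (\<lambda>\<epsilon>. ereal ((cF \<delta> g1 g2 a b i - cFcat \<delta> g1 g2 a' b' \<epsilon> a b i) / \<epsilon>)) \<ge> 0)"

definition strong_equilibrium :: "(real \<Rightarrow> real) \<Rightarrow> (real \<Rightarrow> real) \<Rightarrow> (real \<Rightarrow> real)
    \<Rightarrow> real \<Rightarrow> real \<Rightarrow> bool" where
  "strong_equilibrium \<delta> g1 g2 a b \<longleftrightarrow>
     (\<forall>a' b' i. 0 \<le> a' \<longrightarrow> 0 \<le> b' \<longrightarrow> i \<in> {1,2} \<longrightarrow>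
        (\<exists>\<epsilon>>0. \<forall>\<epsilon>'. 0 < \<epsilon>' \<and> \<epsilon>' \<le> \<epsilon> \<longrightarrow>
            cF \<delta> g1 g2 a b i \<ge> cFcat \<delta> g1 g2 a' b' \<epsilon>' a b i))"

definition dstep :: "real \<Rightarrow> real \<Rightarrow> nat \<Rightarrow> nat \<Rightarrow> real" where
  "dstep \<alpha> \<beta> i j = (if i = 1 then (if j = 1 then 1 - \<alpha> else \<alpha>) else (if j = 1 then \<beta> else 1 - \<beta>))"

fun dtrans :: "real \<Rightarrow> real \<Rightarrow> nat \<Rightarrow> nat \<Rightarrow> nat \<Rightarrow> real" where
  "dtrans \<alpha> \<beta> 0 i j = (if i = j then 1 else 0)"
| "dtrans \<alpha> \<beta> (Suc n) i j = (\<Sum>k\<in>{1,2}. dtrans \<alpha> \<beta> n i k * dstep \<alpha> \<beta> k j)"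

definition kap :: "(real \<Rightarrow> real) \<Rightarrow> (real \<Rightarrow> real) \<Rightarrow> (real \<Rightarrow> real) \<Rightarrow> real
    \<Rightarrow> nat \<Rightarrow> nat \<Rightarrow> real \<Rightarrow> real \<Rightarrow> real" where
  "kap \<delta> g1 g2 h n j \<alpha> \<beta> = \<delta> (real n * h) * (if j = 1 then g1 (\<alpha> / h) else g2 (\<beta> / h)) * h"

definition dV :: "(real \<Rightarrow> real) \<Rightarrow> (real \<Rightarrow> real) \<Rightarrow> (real \<Rightarrow> real) \<Rightarrow> real
    \<Rightarrow> real \<Rightarrow> real \<Rightarrow> nat \<Rightarrow> real" where
  "dV \<delta> g1 g2 h \<alpha> \<beta> i =
     (\<Sum>n. \<Sum>j\<in>{1,2}. dtrans \<alpha> \<beta> n i j * kap \<delta> g1 g2 h n j \<alpha> \<beta>)"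

definition dVcat :: "(real \<Rightarrow> real) \<Rightarrow> (real \<Rightarrow> real) \<Rightarrow> (real \<Rightarrow> real) \<Rightarrow> real
    \<Rightarrow> real \<Rightarrow> real \<Rightarrow> real \<Rightarrow> real \<Rightarrow> nat \<Rightarrow> real" where
  "dVcat \<delta> g1 g2 h \<alpha> \<beta> \<alpha>' \<beta>' i =
     kap \<delta> g1 g2 h 0 i \<alpha> \<beta>
   + (\<Sum>n. \<Sum>j\<in>{1,2}. \<Sum>k\<in>{1,2}.
        dstep \<alpha> \<beta> i j * dtrans \<alpha>' \<beta>' n j k * kap \<delta> g1 g2 h (Suc n) k \<alpha>' \<beta>')"

definition discrete_equilibrium :: "(real \<Rightarrow> real) \<Rightarrow> (real \<Rightarrow> real) \<Rightarrow> (real \<Rightarrow> real)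
    \<Rightarrow> real \<Rightarrow> real \<Rightarrow> real \<Rightarrow> bool" where
  "discrete_equilibrium \<delta> g1 g2 h \<alpha> \<beta> \<longleftrightarrow>
     (\<forall>\<alpha>' \<beta>' i. \<alpha>' \<in> {0..1} \<longrightarrow> \<beta>' \<in> {0..1} \<longrightarrow> i \<in> {1,2} \<longrightarrow>
        dV \<delta> g1 g2 h \<alpha> \<beta> i \<ge> dVcat \<delta> g1 g2 h \<alpha>' \<beta>' \<alpha> \<beta> i)"

end

theory Submission
  imports Defs
begin

(* While the chain with generator (0,0) stays put, deviating to Q ~ (a,b) on [0,eps] pays the
   running payoff under Q plus, from eps on, the rates g_j(0) weighted by the state distribution
   at eps and by the tail integral of delta from eps.  This is differentiable in eps, so the
   weak equilibrium condition is the sign of the derivative at eps = 0; for the quartic g1 it is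
   -a^2 (a/2 - k)^2 <= 0 in state 1 and -3b/4 <= 0 in state 2.  For a = 2k the derivative
   vanishes at 0 but equals k/4 e^(-2k eps) (e^(-eps) - e^(-2 eps)) > 0 for eps > 0, since delta is
   not exponential: deviating on any short interval strictly pays, so (0,0) is not a strong
   equilibrium.  In discrete time the gain of a one-step deviation alpha = x h in state 1 is
   -h (x^2 (x/2 - k)^2 + 3x/4 - x h T) with T = sum_(n>=1) delta(n h), and h T <= 3/4, the
   integral of delta, for every h > 0. *)

definition reward_rate :: "(real \<Rightarrow> real) \<Rightarrow> (real \<Rightarrow> real) \<Rightarrow> real \<Rightarrow> real \<Rightarrow> nat \<Rightarrow> real" where
  "reward_rate g1 g2 a b j = (if j = 1 then g1 a else g2 b)"

lemma crew_eq: "crew \<delta> g1 g2 a b t j = \<delta> t * reward_rate g1 g2 a b j"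
  by (simp add: crew_def reward_rate_def)

lemma ctrans_eq: "ctrans a b t i j = (if i = j then 1 else 0)
   + (if a + b = 0 then t else (1 - exp (- (a + b) * t)) / (a + b)) * gen a b i j"
  by (simp add: ctrans_def Let_def)

lemma ctrans_zero_zero [simp]: "ctrans 0 0 t i j = (if i = j then 1 else 0)"
  by (simp add: ctrans_eq gen_def)

lemma ctrans_at_0 [simp]: "ctrans a b 0 i j = (if i = j then 1 else 0)"
  by (simp add: ctrans_eq)

lemma ctrans_has_real_derivative:
  "((\<lambda>t. ctrans a b t i j) has_real_derivative exp (- (a + b) * t) * gen a b i j) (at t within S)"
proof (cases "a + b = 0")
  case True
  then show ?thesis
    unfolding ctrans_eq by (auto intro!: derivative_eq_intros)
next
  case False
  define c where "c = a + b"
  have "c \<noteq> 0"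
    using False by (simp add: c_def)
  then have "((\<lambda>t. (1 - exp (- c * t)) / c) has_real_derivative exp (- c * t)) (at t within S)"
    by (auto intro!: derivative_eq_intros simp: field_simps)
  from DERIV_add[OF DERIV_const DERIV_cmult_right[OF this]] show ?thesis
    unfolding ctrans_eq c_def using False by simp
qed

lemma continuous_on_ctrans [continuous_intros]: "continuous_on S (\<lambda>t. ctrans a b t i j)"
  unfolding continuous_on_eq_continuous_within
  using DERIV_continuous ctrans_has_real_derivative by blast

definition discount_tail :: "(real \<Rightarrow> real) \<Rightarrow> real \<Rightarrow> real" where
  "discount_tail \<delta> e = integral {e..} \<delta>"

(* d/d eps of F(i, Q (x)_eps (0,0)) at eps = x, for Q ~ (a,b). *)
definition deviation_payoff_deriv :: "(real \<Rightarrow> real) \<Rightarrow> (real \<Rightarrow> real) \<Rightarrow> (real \<Rightarrow> real)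
    \<Rightarrow> real \<Rightarrow> real \<Rightarrow> nat \<Rightarrow> real \<Rightarrow> real" where
  "deviation_payoff_deriv \<delta> g1 g2 a b i x =
     (\<Sum>j\<in>{1,2}. ctrans a b x i j * \<delta> x * (reward_rate g1 g2 a b j - reward_rate g1 g2 0 0 j)
        + exp (- (a + b) * x) * gen a b i j * discount_tail \<delta> x * reward_rate g1 g2 0 0 j)"

locale discount_function =
  fixes \<delta> :: "real \<Rightarrow> real"
  assumes continuous: "continuous_on {0..} \<delta>"
    and integrable_tail: "0 \<le> e \<Longrightarrow> \<delta> integrable_on {e..}"
begin

lemma discount_tail_split:
  assumes "0 \<le> e"
  shows "discount_tail \<delta> 0 = integral {0..e} \<delta> + discount_tail \<delta> e"
proof -
  have "(\<delta> has_integral integral {0..e} \<delta> + discount_tail \<delta> e) ({0..e} \<union> {e..})"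
  proof (rule has_integral_Un)
    show "(\<delta> has_integral integral {0..e} \<delta>) {0..e}"
      using continuous by (intro integrable_integral integrable_continuous_interval)
        (auto elim: continuous_on_subset)
    show "(\<delta> has_integral discount_tail \<delta> e) {e..}"
      unfolding discount_tail_def using integrable_tail[OF assms] by blast
    have "{0..e} \<inter> {e..} = {e}"
      using assms by auto
    then show "negligible ({0..e} \<inter> {e..})"
      by simp
  qed
  moreover have "{0..e} \<union> {e..} = {0::real..}"
    using assms by auto
  ultimately show ?thesis
    unfolding discount_tail_def by (simp add: integral_unique)
qed

lemma discount_tail_has_real_derivative:
  assumes "x \<in> {0..B}"
  shows "(discount_tail \<delta> has_real_derivative - \<delta> x) (at x within {0..B})"
proof (rule has_field_derivative_transform_within[where d = 1])
  show "((\<lambda>e. discount_tail \<delta> 0 - integral {0..e} \<delta>) has_real_derivative - \<delta> x) (at x within {0..B})"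
    using integral_has_real_derivative[OF continuous_on_subset[OF continuous] assms]
    by (auto intro!: derivative_eq_intros)
qed (use assms discount_tail_split in auto)

lemma cF_stay:
  assumes "i \<in> {1,2}"
  shows "cF \<delta> g1 g2 0 0 i = reward_rate g1 g2 0 0 i * discount_tail \<delta> 0"
proof -
  have "(\<lambda>t. \<Sum>j\<in>{1,2}. ctrans 0 0 t i j * crew \<delta> g1 g2 0 0 t j)
      = (\<lambda>t. reward_rate g1 g2 0 0 i * \<delta> t)"
    using assms by (auto simp: crew_eq)
  then show ?thesis
    unfolding cF_def discount_tail_def by simp
qed

lemma cFcat_stay:
  assumes "0 \<le> \<epsilon>"
  shows "cFcat \<delta> g1 g2 a b \<epsilon> 0 0 i =
     integral {0..\<epsilon>} (\<lambda>t. \<Sum>j\<in>{1,2}. ctrans a b t i j * crew \<delta> g1 g2 a b t j)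
   + (\<Sum>j\<in>{1,2}. ctrans a b \<epsilon> i j * reward_rate g1 g2 0 0 j) * discount_tail \<delta> \<epsilon>"
proof -
  have "(\<lambda>t. \<Sum>j\<in>{1,2}. \<Sum>k\<in>{1,2}.
        ctrans a b \<epsilon> i j * ctrans 0 0 (t - \<epsilon>) j k * crew \<delta> g1 g2 0 0 t k)
      = (\<lambda>t. (\<Sum>j\<in>{1,2}. ctrans a b \<epsilon> i j * reward_rate g1 g2 0 0 j) * \<delta> t)"
    by (auto simp: crew_eq algebra_simps)
  then show ?thesis
    unfolding cFcat_def discount_tail_def by simp
qed

lemma cFcat_stay_at_0:
  assumes "i \<in> {1,2}"
  shows "cFcat \<delta> g1 g2 a b 0 0 0 i = cF \<delta> g1 g2 0 0 i"
  using assms by (auto simp: cFcat_stay cF_stay)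

lemma cFcat_stay_has_real_derivative:
  assumes "x \<in> {0..B}"
  shows "((\<lambda>\<epsilon>. cFcat \<delta> g1 g2 a b \<epsilon> 0 0 i) has_real_derivative
           deviation_payoff_deriv \<delta> g1 g2 a b i x) (at x within {0..B})"
proof (rule has_field_derivative_transform_within[where d = 1])
  let ?f = "\<lambda>t. \<Sum>j\<in>{1,2}. ctrans a b t i j * crew \<delta> g1 g2 a b t j"
  have "continuous_on {0..B} \<delta>"
    using continuous by (rule continuous_on_subset) auto
  then have "continuous_on {0..B} ?f"
    by (auto simp: crew_eq intro!: continuous_intros)
  from this assms have running: "((\<lambda>\<epsilon>. integral {0..\<epsilon>} ?f) has_real_derivative ?f x) (at x within {0..B})"
    by (rule integral_has_real_derivative)
  have switched: "((\<lambda>\<epsilon>. (\<Sum>j\<in>{1,2}. ctrans a b \<epsilon> i j * reward_rate g1 g2 0 0 j) * discount_tail \<delta> \<epsilon>)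
      has_real_derivative
        (\<Sum>j\<in>{1,2}. ctrans a b x i j * reward_rate g1 g2 0 0 j) * - \<delta> x
      + (\<Sum>j\<in>{1,2}. exp (- (a + b) * x) * gen a b i j * reward_rate g1 g2 0 0 j) * discount_tail \<delta> x)
      (at x within {0..B})"
    by (intro DERIV_mult' DERIV_sum DERIV_cmult_right ctrans_has_real_derivative
        discount_tail_has_real_derivative assms)
  have "?f x + ((\<Sum>j\<in>{1,2}. ctrans a b x i j * reward_rate g1 g2 0 0 j) * - \<delta> x
      + (\<Sum>j\<in>{1,2}. exp (- (a + b) * x) * gen a b i j * reward_rate g1 g2 0 0 j) * discount_tail \<delta> x)
      = deviation_payoff_deriv \<delta> g1 g2 a b i x"
    unfolding deviation_payoff_deriv_def crew_eq by simp algebra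
  from DERIV_cong[OF DERIV_add[OF running switched] this]
  show "((\<lambda>\<epsilon>. integral {0..\<epsilon>} ?f
      + (\<Sum>j\<in>{1,2}. ctrans a b \<epsilon> i j * reward_rate g1 g2 0 0 j) * discount_tail \<delta> \<epsilon>)
      has_real_derivative deviation_payoff_deriv \<delta> g1 g2 a b i x) (at x within {0..B})" .
qed (use assms in \<open>auto simp: cFcat_stay\<close>)

lemma deviation_quotient_tendsto:
  assumes "i \<in> {1,2}"
  shows "((\<lambda>\<epsilon>. (cF \<delta> g1 g2 0 0 i - cFcat \<delta> g1 g2 a b \<epsilon> 0 0 i) / \<epsilon>)
           \<longlongrightarrow> - deviation_payoff_deriv \<delta> g1 g2 a b i 0) (at_right 0)"
proof -
  have "((\<lambda>\<epsilon>. (cFcat \<delta> g1 g2 a b \<epsilon> 0 0 i - cFcat \<delta> g1 g2 a b 0 0 0 i) / (\<epsilon> - 0))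
           \<longlongrightarrow> deviation_payoff_deriv \<delta> g1 g2 a b i 0) (at_right 0)"
    using cFcat_stay_has_real_derivative[of 0 1]
    unfolding has_field_derivative_iff at_within_Icc_at_right[OF zero_less_one] by simp
  from tendsto_minus[OF this] show ?thesis
    using assms by (simp add: cFcat_stay_at_0 minus_divide_left)
qed

lemma weak_equilibrium_stayI:
  assumes "\<And>a b i. 0 \<le> a \<Longrightarrow> 0 \<le> b \<Longrightarrow> i \<in> {1,2} \<Longrightarrow> deviation_payoff_deriv \<delta> g1 g2 a b i 0 \<le> 0"
  shows "weak_equilibrium \<delta> g1 g2 0 0"
  unfolding weak_equilibrium_def
proof (intro allI impI)
  fix a b :: real and i :: nat
  assume "0 \<le> a" "0 \<le> b" "i \<in> {1,2}"
  have "Liminf (at_right 0) (\<lambda>\<epsilon>. ereal ((cF \<delta> g1 g2 0 0 i - cFcat \<delta> g1 g2 a b \<epsilon> 0 0 i) / \<epsilon>))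
      = ereal (- deviation_payoff_deriv \<delta> g1 g2 a b i 0)"
    using \<open>i \<in> {1,2}\<close> by (intro lim_imp_Liminf tendsto_ereal deviation_quotient_tendsto) auto
  then show "0 \<le> Liminf (at_right 0) (\<lambda>\<epsilon>. ereal ((cF \<delta> g1 g2 0 0 i - cFcat \<delta> g1 g2 a b \<epsilon> 0 0 i) / \<epsilon>))"
    using assms[OF \<open>0 \<le> a\<close> \<open>0 \<le> b\<close> \<open>i \<in> {1,2}\<close>] by simp
qed

lemma cF_less_cFcat_stay:
  assumes "i \<in> {1,2}" "0 < \<epsilon>"
    and pos: "\<And>x. 0 < x \<Longrightarrow> x < \<epsilon> \<Longrightarrow> 0 < deviation_payoff_deriv \<delta> g1 g2 a b i x"
  shows "cF \<delta> g1 g2 0 0 i < cFcat \<delta> g1 g2 a b \<epsilon> 0 0 i"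
proof -
  have "cFcat \<delta> g1 g2 a b 0 0 0 i < cFcat \<delta> g1 g2 a b \<epsilon> 0 0 i"
  proof (rule DERIV_pos_imp_increasing_open[OF \<open>0 < \<epsilon>\<close>])
    fix x
    assume x: "0 < x" "x < \<epsilon>"
    have "((\<lambda>\<epsilon>. cFcat \<delta> g1 g2 a b \<epsilon> 0 0 i) has_real_derivative
        deviation_payoff_deriv \<delta> g1 g2 a b i x) (at x within {0..\<epsilon>})"
      using x by (intro cFcat_stay_has_real_derivative) simp
    moreover have "at x within {0..\<epsilon>} = at x"
      using x by (intro at_within_interior) simp
    ultimately show "\<exists>y. ((\<lambda>\<epsilon>. cFcat \<delta> g1 g2 a b \<epsilon> 0 0 i) has_real_derivative y) (at x) \<and> 0 < y"
      using pos[OF x] by auto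
  next
    show "continuous_on {0..\<epsilon>} (\<lambda>\<epsilon>. cFcat \<delta> g1 g2 a b \<epsilon> 0 0 i)"
      by (auto simp: continuous_on_eq_continuous_within
          intro!: DERIV_continuous cFcat_stay_has_real_derivative)
  qed
  with \<open>i \<in> {1,2}\<close> show ?thesis
    by (simp add: cFcat_stay_at_0)
qed

lemma not_strong_equilibrium_stayI:
  assumes "0 \<le> a" "0 \<le> b" "i \<in> {1,2}" "0 < e"
    and pos: "\<And>x. 0 < x \<Longrightarrow> x < e \<Longrightarrow> 0 < deviation_payoff_deriv \<delta> g1 g2 a b i x"
  shows "\<not> strong_equilibrium \<delta> g1 g2 0 0"
  unfolding strong_equilibrium_def
proof
  assume "\<forall>a' b' i. 0 \<le> a' \<longrightarrow> 0 \<le> b' \<longrightarrow> i \<in> {1,2} \<longrightarrow>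
    (\<exists>\<epsilon>>0. \<forall>\<epsilon>'. 0 < \<epsilon>' \<and> \<epsilon>' \<le> \<epsilon> \<longrightarrow> cFcat \<delta> g1 g2 a' b' \<epsilon>' 0 0 i \<le> cF \<delta> g1 g2 0 0 i)"
  from this[rule_format, OF assms(1-3)] obtain \<epsilon> where "0 < \<epsilon>"
    and stable: "\<And>\<epsilon>'. 0 < \<epsilon>' \<and> \<epsilon>' \<le> \<epsilon> \<Longrightarrow> cFcat \<delta> g1 g2 a b \<epsilon>' 0 0 i \<le> cF \<delta> g1 g2 0 0 i"
    by blast
  have "cFcat \<delta> g1 g2 a b (min \<epsilon> e) 0 0 i \<le> cF \<delta> g1 g2 0 0 i"
    using \<open>0 < \<epsilon>\<close> \<open>0 < e\<close> by (intro stable) simp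
  moreover have "cF \<delta> g1 g2 0 0 i < cFcat \<delta> g1 g2 a b (min \<epsilon> e) 0 0 i"
    using \<open>0 < \<epsilon>\<close> \<open>0 < e\<close> by (intro cF_less_cFcat_stay assms(3) pos) auto
  ultimately show False
    by simp
qed

end

lemma dtrans_identity:
  assumes "j \<in> {1,2}"
  shows "dtrans 0 0 n i j = (if i = j then 1 else 0)"
  using assms by (induction n arbitrary: j) (auto simp: dstep_def)

lemma kap_eq:
  "kap \<delta> g1 g2 h n j \<alpha> \<beta> = h * \<delta> (real n * h) * reward_rate g1 g2 (\<alpha> / h) (\<beta> / h) j"
  by (simp add: kap_def reward_rate_def)

lemma dV_stay:
  assumes "summable (\<lambda>n. \<delta> (real n * h))" "i \<in> {1,2}"
  shows "dV \<delta> g1 g2 h 0 0 i = h * reward_rate g1 g2 0 0 i * (\<Sum>n. \<delta> (real n * h))"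
proof -
  have "(\<lambda>n. \<Sum>j\<in>{1,2}. dtrans 0 0 n i j * kap \<delta> g1 g2 h n j 0 0)
      = (\<lambda>n. h * reward_rate g1 g2 0 0 i * \<delta> (real n * h))"
    using assms(2) by (auto simp: dtrans_identity kap_eq)
  then show ?thesis
    unfolding dV_def using suminf_mult[OF assms(1)] by simp
qed

lemma dVcat_stay:
  assumes "summable (\<lambda>n. \<delta> (real n * h))"
  shows "dVcat \<delta> g1 g2 h \<alpha> \<beta> 0 0 i = h * \<delta> 0 * reward_rate g1 g2 (\<alpha> / h) (\<beta> / h) i
     + h * (\<Sum>j\<in>{1,2}. dstep \<alpha> \<beta> i j * reward_rate g1 g2 0 0 j) * (\<Sum>n. \<delta> (real (Suc n) * h))"
proof -
  have "summable (\<lambda>n. \<delta> (real (Suc n) * h))"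
    using assms summable_Suc_iff[of "\<lambda>n. \<delta> (real n * h)"] by simp
  moreover have "(\<lambda>n. \<Sum>j\<in>{1,2}. \<Sum>k\<in>{1,2}.
        dstep \<alpha> \<beta> i j * dtrans 0 0 n j k * kap \<delta> g1 g2 h (Suc n) k 0 0)
      = (\<lambda>n. h * (\<Sum>j\<in>{1,2}. dstep \<alpha> \<beta> i j * reward_rate g1 g2 0 0 j) * \<delta> (real (Suc n) * h))"
    by (auto simp: dtrans_identity kap_eq algebra_simps)
  ultimately show ?thesis
    unfolding dVcat_def by (simp add: suminf_mult kap_eq)
qed

definition mixed_exp_discount :: "real \<Rightarrow> real" where
  "mixed_exp_discount t = exp (- t) / 2 + exp (- 2 * t) / 2"

definition quartic_reward :: "real \<Rightarrow> real \<Rightarrow> real" where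
  "quartic_reward k a = - (1/4) * a ^ 4 + k * a ^ 3 - k ^ 2 * a ^ 2 - (3/4) * a - 1"

lemma quartic_reward_eq: "quartic_reward k a = - 1 - 3/4 * a - a\<^sup>2 * (a / 2 - k)\<^sup>2"
  by (simp add: quartic_reward_def power2_eq_square eval_nat_numeral field_simps)

lemma quartic_reward_at_0 [simp]: "quartic_reward k 0 = - 1"
  by (simp add: quartic_reward_def)

lemma mixed_exp_discount_has_integral:
  "(mixed_exp_discount has_integral exp (- e) / 2 + exp (- 2 * e) / 4) {e..}"
proof -
  have "((\<lambda>t. exp (- 1 * t) / 2 + exp (- 2 * t) / 2)
      has_integral exp (- 1 * e) / 1 / 2 + exp (- 2 * e) / 2 / 2) {e..}"
    by (intro has_integral_add has_integral_divide has_integral_exp_minus_to_infinity) auto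
  then show ?thesis
    by (simp add: mixed_exp_discount_def[abs_def])
qed

interpretation mixed: discount_function mixed_exp_discount
proof
  show "continuous_on {0..} mixed_exp_discount"
    unfolding mixed_exp_discount_def by (intro continuous_intros) auto
  show "mixed_exp_discount integrable_on {e..}" for e :: real
    using mixed_exp_discount_has_integral by blast
qed

lemma discount_tail_mixed_exp_discount:
  "discount_tail mixed_exp_discount e = exp (- e) / 2 + exp (- 2 * e) / 4"
  unfolding discount_tail_def using mixed_exp_discount_has_integral by (rule integral_unique)

lemma deviation_payoff_deriv_quartic_at_0:
  "deviation_payoff_deriv mixed_exp_discount (quartic_reward k) (\<lambda>_. 0) a b 1 0
     = - a\<^sup>2 * (a / 2 - k)\<^sup>2"
  "deviation_payoff_deriv mixed_exp_discount (quartic_reward k) (\<lambda>_. 0) a b 2 0 = - 3/4 * b"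
  by (simp_all add: deviation_payoff_deriv_def reward_rate_def gen_def discount_tail_mixed_exp_discount
      mixed_exp_discount_def quartic_reward_eq)

lemma deviation_payoff_deriv_quartic_at_2k:
  assumes "0 < k"
  shows "deviation_payoff_deriv mixed_exp_discount (quartic_reward k) (\<lambda>_. 0) (2 * k) 0 1 x
    = k / 4 * exp (- (2 * k) * x) * (exp (- x) - exp (- 2 * x))"
  using assms
  by (simp add: deviation_payoff_deriv_def reward_rate_def gen_def ctrans_eq discount_tail_mixed_exp_discount
      mixed_exp_discount_def quartic_reward_eq field_simps)

lemma geometric_tail_le:
  fixes c h :: real
  assumes "0 < c" "0 < h"
  shows "h * (\<Sum>n. exp (- c * h) ^ Suc n) \<le> 1 / c"
proof -
  have "(\<Sum>n. exp (- c * h) ^ Suc n) = exp (- c * h) / (1 - exp (- c * h))"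
    using assms suminf_mult[OF summable_geometric, of "exp (- c * h)" "exp (- c * h)"]
    by (simp add: suminf_geometric)
  also have "\<dots> = 1 / (exp (c * h) - 1)"
    using assms by (simp add: exp_minus field_simps)
  also have "\<dots> \<le> 1 / (c * h)"
  proof (rule divide_left_mono)
    show "c * h \<le> exp (c * h) - 1"
      using exp_ge_add_one_self[of "c * h"] by linarith
  qed (use assms in auto)
  finally show ?thesis
    using assms by (simp add: field_simps)
qed

lemma mixed_exp_discount_sampled:
  "mixed_exp_discount (real n * h) = exp (- h) ^ n / 2 + exp (- 2 * h) ^ n / 2"
  unfolding mixed_exp_discount_def exp_of_nat_mult[symmetric] by (simp add: algebra_simps)

lemma summable_mixed_exp_discount:
  assumes "0 < h"
  shows "summable (\<lambda>n. mixed_exp_discount (real n * h))"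
  unfolding mixed_exp_discount_sampled using assms
  by (intro summable_add summable_divide summable_geometric) auto

lemma mixed_exp_discount_sampled_tail_le:
  assumes "0 < h"
  shows "h * (\<Sum>n. mixed_exp_discount (real (Suc n) * h)) \<le> 3/4"
proof -
  have geometric: "(\<lambda>n. exp (- c * h) ^ Suc n) sums (\<Sum>n. exp (- c * h) ^ Suc n)" if "0 < c" for c
    unfolding power_Suc using assms that
    by (intro summable_sums summable_mult summable_geometric) auto
  have "(\<lambda>n. mixed_exp_discount (real (Suc n) * h))
      sums ((\<Sum>n. exp (- 1 * h) ^ Suc n) / 2 + (\<Sum>n. exp (- 2 * h) ^ Suc n) / 2)"
    unfolding mixed_exp_discount_sampled
    using sums_add[OF sums_divide[OF geometric] sums_divide[OF geometric], of 1 2 2 2] by simp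
  with geometric_tail_le[OF _ assms, of 1] geometric_tail_le[OF _ assms, of 2] show ?thesis
    by (simp add: sums_unique[symmetric] field_simps)
qed

lemma discrete_equilibrium_quartic:
  assumes "0 < h"
  shows "discrete_equilibrium mixed_exp_discount (quartic_reward k) (\<lambda>_. 0) h 0 0"
  unfolding discrete_equilibrium_def
proof (intro allI impI)
  fix \<alpha> \<beta> :: real and i :: nat
  assume \<alpha>: "\<alpha> \<in> {0..1}" and \<beta>: "\<beta> \<in> {0..1}" and i: "i \<in> {1,2}"
  define T where "T = (\<Sum>n. mixed_exp_discount (real (Suc n) * h))"
  have summable: "summable (\<lambda>n. mixed_exp_discount (real n * h))"
    using assms by (rule summable_mixed_exp_discount)
  have sum: "(\<Sum>n. mixed_exp_discount (real n * h)) = 1 + T"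
    using suminf_split_head[OF summable] by (simp add: T_def mixed_exp_discount_def)
  have "0 \<le> T"
    unfolding T_def using summable_Suc_iff[THEN iffD2, OF summable]
    by (rule suminf_nonneg) (simp add: mixed_exp_discount_def add_nonneg_nonneg)
  have hT: "h * T \<le> 3/4"
    unfolding T_def using assms by (rule mixed_exp_discount_sampled_tail_le)
  show "dVcat mixed_exp_discount (quartic_reward k) (\<lambda>_. 0) h \<alpha> \<beta> 0 0 i
      \<le> dV mixed_exp_discount (quartic_reward k) (\<lambda>_. 0) h 0 0 i"
  proof (cases "i = 1")
    case True
    define x where "x = \<alpha> / h"
    define P where "P = x\<^sup>2 * (x / 2 - k)\<^sup>2"
    have \<alpha>_eq: "\<alpha> = x * h" and "0 \<le> x"
      using assms \<alpha> by (auto simp: x_def)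
    have quartic: "quartic_reward k x = - 1 - 3/4 * x - P"
      by (simp add: quartic_reward_eq P_def)
    have dV: "dV mixed_exp_discount (quartic_reward k) (\<lambda>_. 0) h 0 0 i = - h * (1 + T)"
      using True by (simp add: dV_stay[OF summable] sum reward_rate_def)
    have dVcat: "dVcat mixed_exp_discount (quartic_reward k) (\<lambda>_. 0) h \<alpha> \<beta> 0 0 i
        = h * quartic_reward k x + h * (\<alpha> - 1) * T"
      using True
      by (simp add: dVcat_stay[OF summable, folded T_def] reward_rate_def dstep_def
          mixed_exp_discount_def[of 0] x_def)
    have "x * (h * T) \<le> x * (3/4)"
      using hT \<open>0 \<le> x\<close> by (rule mult_left_mono)
    then have "0 \<le> h * (3/4 * x - x * (h * T) + P)"
      using assms by (simp add: P_def)
    also have "\<dots> = - h * (1 + T) - (h * quartic_reward k x + h * (\<alpha> - 1) * T)"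
      by (simp add: quartic \<alpha>_eq algebra_simps)
    finally show ?thesis
      unfolding dV dVcat by simp
  next
    case False
    have "0 \<le> h * \<beta> * T"
      using assms \<beta> \<open>0 \<le> T\<close> by (intro mult_nonneg_nonneg) auto
    with False i show ?thesis
      by (simp add: dV_stay[OF summable] dVcat_stay[OF summable, folded T_def] reward_rate_def dstep_def)
  qed
qed

theorem mainTheorem14:
  fixes k :: real and \<delta> g1 g2 :: "real \<Rightarrow> real"
  assumes "k > 0"
    and "\<delta> = (\<lambda>t. exp (- t) / 2 + exp (- 2 * t) / 2)"
    and "g2 = (\<lambda>_. 0)"
    and "g1 = (\<lambda>a. - (1/4) * a ^ 4 + k * a ^ 3 - k ^ 2 * a ^ 2 - (3/4) * a - 1)"
  shows "weak_equilibrium \<delta> g1 g2 0 0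
       \<and> \<not> strong_equilibrium \<delta> g1 g2 0 0
       \<and> (\<exists>h0 > 0. \<forall>h. 0 < h \<and> h < h0 \<longrightarrow> discrete_equilibrium \<delta> g1 g2 h 0 0)"
proof -
  have \<delta>: "\<delta> = mixed_exp_discount" and g1: "g1 = quartic_reward k"
    using assms(2,4) by (auto simp: mixed_exp_discount_def quartic_reward_def)
  have "weak_equilibrium mixed_exp_discount (quartic_reward k) (\<lambda>_. 0) 0 0"
  proof (rule mixed.weak_equilibrium_stayI)
    fix a b :: real and i :: nat
    assume "0 \<le> b" "i \<in> {1,2}"
    then show "deviation_payoff_deriv mixed_exp_discount (quartic_reward k) (\<lambda>_. 0) a b i 0 \<le> 0"
      using deviation_payoff_deriv_quartic_at_0[of k a b] by (cases "i = 1") auto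
  qed
  moreover have "\<not> strong_equilibrium mixed_exp_discount (quartic_reward k) (\<lambda>_. 0) 0 0"
  proof (rule mixed.not_strong_equilibrium_stayI[of "2 * k" 0 1 1])
    fix x :: real
    assume "0 < x"
    then have "exp (- 2 * x) < exp (- x)"
      by simp
    with assms(1)
    show "0 < deviation_payoff_deriv mixed_exp_discount (quartic_reward k) (\<lambda>_. 0) (2 * k) 0 1 x"
      unfolding deviation_payoff_deriv_quartic_at_2k[OF assms(1)] by simp
  qed (use assms(1) in auto)
  moreover have "discrete_equilibrium mixed_exp_discount (quartic_reward k) (\<lambda>_. 0) h 0 0"
    if "0 < h" for h
    using that by (rule discrete_equilibrium_quartic)
  ultimately show ?thesis
    unfolding \<delta> g1 assms(3) using zero_less_one by blast
qed

end
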